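(* Let $k,l\ge1$ with $k\ne l$ and $1\le r\le 4kl$. Let $\overline{\mathcal{B}}(2k,2l;r)$ be the subset of $\mathcal{B}(2k,2l;r)$ consisting of boards whose board partition $(\lambda_1,\lambda_2,\lambda_3,\lambda_4)$ satisfies: (i) $\lambda_1\ge\lambda_i$ for all $i>1$; (ii) if $\lambda_1=\lambda_2$ then $\lambda_3\ge\lambda_4$; (iii) if $\lambda_1=\lambda_3$ then $\lambda_2\ge\lambda_4$; (iv) if $\lambda_1=\lambda_4$ then $\lambda_2\ge\lambda_3$. Then: (1) $\overline{\mathcal{B}}(2k,2l;r)$ is a disjoint union of sets each consisting of all boards in $\mathcal{B}(2k,2l;r)$ with some fixed board partition; (2) every board of $\mathcal{B}(2k,2l;r)$ is equivalent under $\langle H,V\rangle$ to some board of $\overline{\mathcal{B}}(2k,2l;r)$; (3) if two boards of $\overline{\mathcal{B}}(2k,2l;r)$ are equivalent under $\langle H,V\rangle$, they have the same board partition.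
   Context: A $2k\times 2l$ grid ($2k$ rows numbered top to bottom, $2l$ columns numbered left to right) of unit cells; $\mathcal{B}(2k,2l;r)$ is the set of boards, i.e. subsets of exactly $r$ blocked cells. The symmetry group is $\langle H,V\rangle=\{R_0,H,V,R_{180}\}$, where $H$ is reflection across the horizontal midline, $V$ reflection across the vertical midline, $R_{180}$ rotation by 180 degrees; boards are equivalent if some element maps one to the other. The grid is divided into four $k\times l$ quadrants: $Q_1$ = rows $1..k$, cols $1..l$; $Q_2$ = rows $1..k$, cols $l+1..2l$; $Q_3$ = rows $k+1..2k$, cols $l+1..2l$; $Q_4$ = rows $k+1..2k$, cols $1..l$. The board partition is $(\lambda_1,\lambda_2,\lambda_3,\lambda_4)$ with $\lambda_i$ the number of blocked cells in $Q_i$. *)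

theory Defs
  imports Main
begin

(* Cells are pairs (row, column), rows 1..2k top to bottom, columns 1..2l left to right. *)
definition grid :: "nat \<Rightarrow> nat \<Rightarrow> (nat \<times> nat) set" where
  "grid k l = {1..2*k} \<times> {1..2*l}"

definition boards :: "nat \<Rightarrow> nat \<Rightarrow> nat \<Rightarrow> (nat \<times> nat) set set" where
  "boards k l r = {b. b \<subseteq> grid k l \<and> card b = r}"

definition Hrefl :: "nat \<Rightarrow> nat \<Rightarrow> nat \<times> nat \<Rightarrow> nat \<times> nat" where
  "Hrefl k l c = (2*k + 1 - fst c, snd c)"

definition Vrefl :: "nat \<Rightarrow> nat \<Rightarrow> nat \<times> nat \<Rightarrow> nat \<times> nat" where
  "Vrefl k l c = (fst c, 2*l + 1 - snd c)"

definition Rot180 :: "nat \<Rightarrow> nat \<Rightarrow> nat \<times> nat \<Rightarrow> nat \<times> nat" where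
  "Rot180 k l c = (2*k + 1 - fst c, 2*l + 1 - snd c)"

definition symgroup :: "nat \<Rightarrow> nat \<Rightarrow> (nat \<times> nat \<Rightarrow> nat \<times> nat) set" where
  "symgroup k l = {id, Hrefl k l, Vrefl k l, Rot180 k l}"

definition equivalent :: "nat \<Rightarrow> nat \<Rightarrow> (nat \<times> nat) set \<Rightarrow> (nat \<times> nat) set \<Rightarrow> bool" where
  "equivalent k l b1 b2 \<longleftrightarrow> (\<exists>g\<in>symgroup k l. g ` b1 = b2)"

definition Q1 :: "nat \<Rightarrow> nat \<Rightarrow> (nat \<times> nat) set" where
  "Q1 k l = {1..k} \<times> {1..l}"
definition Q2 :: "nat \<Rightarrow> nat \<Rightarrow> (nat \<times> nat) set" where
  "Q2 k l = {1..k} \<times> {l+1..2*l}"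
definition Q3 :: "nat \<Rightarrow> nat \<Rightarrow> (nat \<times> nat) set" where
  "Q3 k l = {k+1..2*k} \<times> {l+1..2*l}"
definition Q4 :: "nat \<Rightarrow> nat \<Rightarrow> (nat \<times> nat) set" where
  "Q4 k l = {k+1..2*k} \<times> {1..l}"

definition board_partition :: "nat \<Rightarrow> nat \<Rightarrow> (nat \<times> nat) set \<Rightarrow> nat \<times> nat \<times> nat \<times> nat" where
  "board_partition k l b =
     (card (b \<inter> Q1 k l), card (b \<inter> Q2 k l), card (b \<inter> Q3 k l), card (b \<inter> Q4 k l))"

definition canonical_partition :: "nat \<times> nat \<times> nat \<times> nat \<Rightarrow> bool" where
  "canonical_partition p = (case p of (l1, l2, l3, l4) \<Rightarrow>
     l1 \<ge> l2 \<and> l1 \<ge> l3 \<and> l1 \<ge> l4 \<and>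
     (l1 = l2 \<longrightarrow> l3 \<ge> l4) \<and>
     (l1 = l3 \<longrightarrow> l2 \<ge> l4) \<and>
     (l1 = l4 \<longrightarrow> l2 \<ge> l3))"

definition boards_bar :: "nat \<Rightarrow> nat \<Rightarrow> nat \<Rightarrow> (nat \<times> nat) set set" where
  "boards_bar k l r = {b \<in> boards k l r. canonical_partition (board_partition k l b)}"

end

theory Submission
  imports Defs "HOL-Library.Product_Lexorder"
begin

(* H, V and R180 permute the quadrants by the double transpositions (Q1 Q4)(Q2 Q3),
   (Q1 Q2)(Q3 Q4) and (Q1 Q3)(Q2 Q4), so <H,V> acts on board partitions as the Klein
   four-group acting on 4-tuples.  Conditions (i)-(iv) say precisely that a partition is
   the lexicographic maximum of its orbit under this action, so every orbit contains
   exactly one of them. *)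

definition quadrant_permutations :: "(nat \<times> nat \<times> nat \<times> nat \<Rightarrow> nat \<times> nat \<times> nat \<times> nat) set" where
  "quadrant_permutations =
     {id, \<lambda>(a, b, c, d). (d, c, b, a), \<lambda>(a, b, c, d). (b, a, d, c), \<lambda>(a, b, c, d). (c, d, a, b)}"

lemma quadrant_permutations_involutive: "\<sigma> \<in> quadrant_permutations \<Longrightarrow> \<sigma> (\<sigma> p) = p"
  by (cases p) (auto simp: quadrant_permutations_def)

lemma quadrant_permutations_comp_in_orbit:
  "\<sigma> \<in> quadrant_permutations \<Longrightarrow> \<tau> \<in> quadrant_permutations \<Longrightarrow>
    \<sigma> (\<tau> p) \<in> (\<lambda>\<rho>. \<rho> p) ` quadrant_permutations"
  by (cases p) (auto simp: quadrant_permutations_def)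

lemma canonical_partition_iff_lex_max:
  "canonical_partition p \<longleftrightarrow> (\<forall>\<sigma>\<in>quadrant_permutations. \<sigma> p \<le> p)"
  by (cases p) (auto simp: canonical_partition_def quadrant_permutations_def less_eq_prod_def)

lemma canonical_partition_exists: "\<exists>\<sigma>\<in>quadrant_permutations. canonical_partition (\<sigma> p)"
proof -
  let ?orbit = "(\<lambda>\<sigma>. \<sigma> p) ` quadrant_permutations"
  have "finite ?orbit" "?orbit \<noteq> {}" by (auto simp: quadrant_permutations_def)
  then have "Max ?orbit \<in> ?orbit" by (rule Max_in)
  then obtain \<tau> where \<tau>: "\<tau> \<in> quadrant_permutations" "\<tau> p = Max ?orbit" by auto
  have "\<sigma> (\<tau> p) \<le> \<tau> p" if "\<sigma> \<in> quadrant_permutations" for \<sigma>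
    using Max_ge[OF \<open>finite ?orbit\<close> quadrant_permutations_comp_in_orbit[OF that \<tau>(1)]] \<tau>(2) by simp
  with \<tau>(1) show ?thesis by (auto simp: canonical_partition_iff_lex_max)
qed

lemma canonical_partition_unique:
  assumes "\<sigma> \<in> quadrant_permutations" "canonical_partition p" "canonical_partition (\<sigma> p)"
  shows "\<sigma> p = p"
proof (rule antisym)
  show "\<sigma> p \<le> p" using assms(1,2) by (simp add: canonical_partition_iff_lex_max)
  have "\<sigma> (\<sigma> p) \<le> \<sigma> p" using assms(1,3) by (simp add: canonical_partition_iff_lex_max)
  then show "p \<le> \<sigma> p" using quadrant_permutations_involutive[OF assms(1)] by simp
qed

lemma card_image_Int_eq_card_Int_vimage:
  assumes "inj_on g B"
  shows "card (g ` B \<inter> A) = card (B \<inter> g -` A)"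
proof -
  have "g ` B \<inter> A = g ` (B \<inter> g -` A)" by auto
  with assms show ?thesis by (simp add: card_image inj_on_Int)
qed

(* Truncated subtraction sends rows and columns beyond the grid to 0, outside every
   quadrant, so these identities hold without restricting to the grid. *)
lemma Hrefl_vimage_quadrants:
  "Hrefl k l -` Q1 k l = Q4 k l" "Hrefl k l -` Q2 k l = Q3 k l"
  "Hrefl k l -` Q3 k l = Q2 k l" "Hrefl k l -` Q4 k l = Q1 k l"
  by (auto simp: Hrefl_def Q1_def Q2_def Q3_def Q4_def)

lemma Vrefl_vimage_quadrants:
  "Vrefl k l -` Q1 k l = Q2 k l" "Vrefl k l -` Q2 k l = Q1 k l"
  "Vrefl k l -` Q3 k l = Q4 k l" "Vrefl k l -` Q4 k l = Q3 k l"
  by (auto simp: Vrefl_def Q1_def Q2_def Q3_def Q4_def)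

lemma Rot180_vimage_quadrants:
  "Rot180 k l -` Q1 k l = Q3 k l" "Rot180 k l -` Q2 k l = Q4 k l"
  "Rot180 k l -` Q3 k l = Q1 k l" "Rot180 k l -` Q4 k l = Q2 k l"
  by (auto simp: Rot180_def Q1_def Q2_def Q3_def Q4_def)

lemma symgroup_inj_on_grid: "g \<in> symgroup k l \<Longrightarrow> inj_on g (grid k l)"
  by (auto simp: symgroup_def inj_on_def Hrefl_def Vrefl_def Rot180_def grid_def)

lemma symgroup_image_grid: "g \<in> symgroup k l \<Longrightarrow> g ` grid k l \<subseteq> grid k l"
  by (auto simp: symgroup_def Hrefl_def Vrefl_def Rot180_def grid_def)

lemma symgroup_image_boards:
  assumes "g \<in> symgroup k l" "b \<in> boards k l r"
  shows "g ` b \<in> boards k l r"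
proof -
  have "b \<subseteq> grid k l" "card b = r" using assms(2) by (auto simp: boards_def)
  moreover have "inj_on g b" using symgroup_inj_on_grid[OF assms(1)] \<open>b \<subseteq> grid k l\<close>
    by (rule inj_on_subset)
  ultimately show ?thesis using symgroup_image_grid[OF assms(1)] by (auto simp: boards_def card_image)
qed

lemma board_partition_image:
  assumes "g \<in> symgroup k l" "b \<subseteq> grid k l"
  shows "board_partition k l (g ` b) =
    (card (b \<inter> g -` Q1 k l), card (b \<inter> g -` Q2 k l), card (b \<inter> g -` Q3 k l), card (b \<inter> g -` Q4 k l))"
  using inj_on_subset[OF symgroup_inj_on_grid[OF assms(1)] assms(2)]
  by (simp add: board_partition_def card_image_Int_eq_card_Int_vimage)

lemma board_partition_Hrefl_image:
  "b \<subseteq> grid k l \<Longrightarrow> board_partition k l (Hrefl k l ` b) =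
    (case board_partition k l b of (a, b, c, d) \<Rightarrow> (d, c, b, a))"
  using board_partition_image[of "Hrefl k l"]
  by (simp add: symgroup_def board_partition_def Hrefl_vimage_quadrants)

lemma board_partition_Vrefl_image:
  "b \<subseteq> grid k l \<Longrightarrow> board_partition k l (Vrefl k l ` b) =
    (case board_partition k l b of (a, b, c, d) \<Rightarrow> (b, a, d, c))"
  using board_partition_image[of "Vrefl k l"]
  by (simp add: symgroup_def board_partition_def Vrefl_vimage_quadrants)

lemma board_partition_Rot180_image:
  "b \<subseteq> grid k l \<Longrightarrow> board_partition k l (Rot180 k l ` b) =
    (case board_partition k l b of (a, b, c, d) \<Rightarrow> (c, d, a, b))"
  using board_partition_image[of "Rot180 k l"]
  by (simp add: symgroup_def board_partition_def Rot180_vimage_quadrants)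

lemma board_partition_orbit:
  "b \<subseteq> grid k l \<Longrightarrow> (\<lambda>g. board_partition k l (g ` b)) ` symgroup k l =
    (\<lambda>\<sigma>. \<sigma> (board_partition k l b)) ` quadrant_permutations"
  by (simp add: symgroup_def quadrant_permutations_def board_partition_Hrefl_image
      board_partition_Vrefl_image board_partition_Rot180_image)

lemma exists_equivalent_in_boards_bar:
  assumes b: "b \<in> boards k l r"
  shows "\<exists>b'\<in>boards_bar k l r. equivalent k l b b'"
proof -
  obtain \<sigma> where \<sigma>: "\<sigma> \<in> quadrant_permutations" "canonical_partition (\<sigma> (board_partition k l b))"
    using canonical_partition_exists by blast
  have "b \<subseteq> grid k l" using b by (simp add: boards_def)
  with \<sigma>(1) have "\<sigma> (board_partition k l b) \<in> (\<lambda>g. board_partition k l (g ` b)) ` symgroup k l"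
    by (simp add: board_partition_orbit)
  with \<sigma>(2) obtain g where g: "g \<in> symgroup k l" "canonical_partition (board_partition k l (g ` b))"
    by auto
  then have "g ` b \<in> boards_bar k l r" using symgroup_image_boards[OF g(1) b] by (simp add: boards_bar_def)
  with g(1) show ?thesis by (auto simp: equivalent_def)
qed

lemma board_partition_eq_if_equivalent:
  assumes b1: "b1 \<in> boards_bar k l r" and b2: "b2 \<in> boards_bar k l r"
    and "equivalent k l b1 b2"
  shows "board_partition k l b1 = board_partition k l b2"
proof -
  obtain g where g: "g \<in> symgroup k l" "g ` b1 = b2"
    using \<open>equivalent k l b1 b2\<close> by (auto simp: equivalent_def)
  have "b1 \<subseteq> grid k l" using b1 by (simp add: boards_bar_def boards_def)
  with g have "board_partition k l b2 \<in> (\<lambda>\<sigma>. \<sigma> (board_partition k l b1)) ` quadrant_permutations"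
    by (auto simp flip: board_partition_orbit)
  then obtain \<sigma> where "\<sigma> \<in> quadrant_permutations"
      "board_partition k l b2 = \<sigma> (board_partition k l b1)"
    by auto
  moreover have "canonical_partition (board_partition k l b1)" "canonical_partition (board_partition k l b2)"
    using b1 b2 by (simp_all add: boards_bar_def)
  ultimately show ?thesis using canonical_partition_unique by metis
qed

theorem theorem4p5:
  fixes k l r :: nat
  assumes "k \<ge> 1" and "l \<ge> 1" and "k \<noteq> l" and "1 \<le> r" and "r \<le> 4*k*l"
  shows "(\<exists>S. boards_bar k l r = (\<Union>p\<in>S. {b \<in> boards k l r. board_partition k l b = p})
              \<and> (\<forall>p\<in>S. \<forall>q\<in>S. p \<noteq> q \<longrightarrow>
                   {b \<in> boards k l r. board_partition k l b = p} \<inter>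
                   {b \<in> boards k l r. board_partition k l b = q} = {}))
       \<and> (\<forall>b\<in>boards k l r. \<exists>b'\<in>boards_bar k l r. equivalent k l b b')
       \<and> (\<forall>b1\<in>boards_bar k l r. \<forall>b2\<in>boards_bar k l r.
            equivalent k l b1 b2 \<longrightarrow> board_partition k l b1 = board_partition k l b2)"
proof -
  have "boards_bar k l r =
      (\<Union>p\<in>Collect canonical_partition. {b \<in> boards k l r. board_partition k l b = p})"
    by (auto simp: boards_bar_def)
  then show ?thesis
    using exists_equivalent_in_boards_bar board_partition_eq_if_equivalent by blast
qed

end
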